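(* Let $X_1,\dots,X_n$ be independent random variables with values in $\mathbb{Z}_+=\{0,1,2,\dots\}$, and suppose that for each $i$ the probability generating function $M_{X_i}(z)=\mathbb{E}(z^{X_i})$ satisfies $$G_{X_i}(z):=\frac{M_{X_i}'(z)}{M_{X_i}(z)}=\sum_{m=0}^{\infty}a_{i,m+1}z^m .$$ Let $Y=\sum_{i=1}^n X_i$ and $\mu=\sum_{i=1}^n\sum_{m=0}^\infty a_{i,m+1}$ (the mean of $Y$). Let $\alpha>0$ and $p\in(0,1)$, $q=1-p$, satisfy $\alpha q/p=\mu$, and let $Z\sim \mathrm{NB}(\alpha,p)$. Then $$d_{TV}(Y,Z)\le \frac{1}{\alpha q}\sum_{i=1}^n\sum_{l=1}^\infty l\,\bigl|a_{i,l+1}-q\,a_{i,l}\bigr| .$$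
   Context: $\mathrm{NB}(\alpha,p)$ denotes the negative binomial distribution with $\mathbf{P}(Z=m)=\binom{\alpha+m-1}{m}p^\alpha q^m$, $m=0,1,\dots$, where $\alpha>0$, $q=1-p\in(0,1)$. The total variation distance is $d_{TV}(Y,X)=\frac12\sum_{m\ge0}|\mathbf{P}(Y=m)-\mathbf{P}(X=m)|$. *)

theory Defs
  imports "HOL-Probability.Probability"
begin

definition nb_pmf :: "real \<Rightarrow> real \<Rightarrow> nat \<Rightarrow> real" where
  "nb_pmf \<alpha> p m = ((\<alpha> + real m - 1) gchoose m) * p powr \<alpha> * (1 - p) ^ m"

definition pgf :: "'a measure \<Rightarrow> ('a \<Rightarrow> nat) \<Rightarrow> real \<Rightarrow> real" where
  "pgf M X z = (\<Sum>k. measure M {\<omega> \<in> space M. X \<omega> = k} * z ^ k)"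

definition dTV :: "'a measure \<Rightarrow> ('a \<Rightarrow> nat) \<Rightarrow> (nat \<Rightarrow> real) \<Rightarrow> real" where
  "dTV M Y f = (1/2) * (\<Sum>m. \<bar>measure M {\<omega> \<in> space M. Y \<omega> = m} - f m\<bar>)"

end

theory Submission
  imports Defs
begin

text \<open>Stein's method for \<open>NB(\<alpha>, p)\<close> with \<open>q = 1 - p\<close>. Let \<open>f\<close> be the law of \<open>Y\<close> and
  \<open>C m = \<Sum>i. a i (m + 1)\<close>. By independence the generating function of \<open>Y\<close> satisfies
  \<open>M' = (\<Sum>m. C m z\<^sup>m) M\<close> near \<open>0\<close>, so \<open>(k + 1) f (k + 1) = (\<Sum>m\<le>k. C m f (k - m))\<close>; together with
  \<open>\<alpha> q = p \<mu>\<close> this writes the Stein operator \<open>q (\<alpha> + k) f k - (k + 1) f (k + 1)\<close> of \<open>NB(\<alpha>, p)\<close>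
  as a convolution of \<open>f\<close> with the errors \<open>E l = C (l + 1) - q C l\<close>. Testing it against the
  solution \<open>g\<close> of the Stein equation for \<open>A = {k. P(Y = k) > P(Z = k)}\<close> and summing by parts gives
  \<open>d\<^sub>T\<^sub>V(Y, Z) = (\<Sum>l. E l \<Sum>j. f j (g (j + 1) - g (j + l + 2)))\<close>, and the inner sum is at most
  \<open>(l + 1) / (q \<alpha>)\<close> because \<open>\<bar>g (k + 1) - g k\<bar> \<le> 1 / (q (\<alpha> + k))\<close> for \<open>k \<ge> 1\<close>.\<close>

section \<open>Series\<close>

lemma summable_abs_if_summable_contraction_diff:
  fixes b :: "nat \<Rightarrow> real"
  assumes q: "0 \<le> q" "q < 1" and d: "summable (\<lambda>l. \<bar>b (Suc l) - q * b l\<bar>)"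
  shows "summable (\<lambda>l. \<bar>b l\<bar>)"
proof (rule summableI_nonneg_bounded)
  define D where "D = (\<Sum>l. \<bar>b (Suc l) - q * b l\<bar>)"
  have step: "\<bar>b (Suc l)\<bar> \<le> q * \<bar>b l\<bar> + \<bar>b (Suc l) - q * b l\<bar>" for l
    using abs_triangle_ineq[of "q * b l" "b (Suc l) - q * b l"] q by (simp add: abs_mult)
  show "(\<Sum>l<N. \<bar>b l\<bar>) \<le> (\<bar>b 0\<bar> + D) / (1 - q)" for N
  proof -
    have "(\<Sum>l<Suc N. \<bar>b l\<bar>) = \<bar>b 0\<bar> + (\<Sum>l<N. \<bar>b (Suc l)\<bar>)"
      by (rule sum.lessThan_Suc_shift)
    also have "\<dots> \<le> \<bar>b 0\<bar> + (\<Sum>l<N. q * \<bar>b l\<bar> + \<bar>b (Suc l) - q * b l\<bar>)"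
      by (intro add_left_mono sum_mono step)
    also have "\<dots> = \<bar>b 0\<bar> + q * (\<Sum>l<N. \<bar>b l\<bar>) + (\<Sum>l<N. \<bar>b (Suc l) - q * b l\<bar>)"
      by (simp add: sum.distrib sum_distrib_left)
    also have "\<dots> \<le> \<bar>b 0\<bar> + q * (\<Sum>l<Suc N. \<bar>b l\<bar>) + D"
      unfolding D_def using sum_le_suminf[OF d, of "{..<N}"] q
      by (intro add_mono mult_left_mono) auto
    finally have "(1 - q) * (\<Sum>l<Suc N. \<bar>b l\<bar>) \<le> \<bar>b 0\<bar> + D"
      by (simp add: algebra_simps)
    then have "(\<Sum>l<Suc N. \<bar>b l\<bar>) \<le> (\<bar>b 0\<bar> + D) / (1 - q)"
      using q by (simp add: field_simps)
    moreover have "(\<Sum>l<N. \<bar>b l\<bar>) \<le> (\<Sum>l<Suc N. \<bar>b l\<bar>)" by simp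
    ultimately show ?thesis by linarith
  qed
qed simp

lemma powser_coeffs_eq_0:
  fixes d :: "nat \<Rightarrow> real"
  assumes "0 < r" and "\<And>z. \<bar>z\<bar> < r \<Longrightarrow> (\<lambda>k. d k * z ^ k) sums 0"
  shows "d k = 0"
proof (induction k rule: less_induct)
  case (less k)
  have "(\<lambda>j. d (j + k) * z ^ j) sums 0" if "z \<noteq> 0" "norm z < r" for z
  proof -
    have "(\<lambda>j. d (j + k) * z ^ (j + k)) sums (0 - (\<Sum>j<k. d j * z ^ j))"
      using sums_split_initial_segment[OF assms(2), of z k] that by simp
    also have "(\<Sum>j<k. d j * z ^ j) = 0" using less by simp
    finally have "(\<lambda>j. d (j + k) * z ^ (j + k) / z ^ k) sums (0 / z ^ k)"
      by (intro sums_divide) simp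
    then show ?thesis using that by (simp add: power_add)
  qed
  then have "((\<lambda>z::real. 0) \<longlongrightarrow> d (0 + k)) (at 0)"
    by (intro powser_limit_0_strong[OF assms(1)])
  then show ?case by (simp add: tendsto_const_iff)
qed

lemma suminf_swap_abs:
  fixes u :: "nat \<Rightarrow> nat \<Rightarrow> real"
  assumes rows: "\<And>l. summable (\<lambda>k. \<bar>u l k\<bar>)" and total: "summable (\<lambda>l. \<Sum>k. \<bar>u l k\<bar>)"
  shows "(\<Sum>l. \<Sum>k. u l k) = (\<Sum>k. \<Sum>l. u l k)"
proof -
  have infsum_eq: "infsum g UNIV = suminf g" if "g summable_on UNIV" for g :: "nat \<Rightarrow> real"
    using that by (metis has_sum_imp_sums has_sum_infsum sums_unique)
  have row_on: "(\<lambda>k. norm (u l k)) summable_on UNIV" for l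
    using rows[of l] by (simp add: summable_on_UNIV_nonneg_real_iff)
  have "(\<lambda>l. norm (infsum (\<lambda>k. norm (u l k)) UNIV)) summable_on UNIV"
    using total infsum_eq[OF row_on] suminf_nonneg[OF rows]
    by (simp add: summable_on_UNIV_nonneg_real_iff)
  then have abs: "(\<lambda>x. norm ((\<lambda>(l, k). u l k) x)) summable_on UNIV \<times> UNIV"
    using Infinite_Sum.abs_summable_on_Sigma_iff[where f="\<lambda>(l, k). u l k" and A=UNIV and B="\<lambda>_. UNIV"]
      row_on by auto
  have abs': "(\<lambda>x. norm ((\<lambda>(k, l). u l k) x)) summable_on UNIV \<times> UNIV"
    using abs summable_on_swap[of "\<lambda>x. norm (case x of (l, k) \<Rightarrow> u l k)" UNIV UNIV]
    by (simp add: case_prod_unfold)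
  have sm: "(\<lambda>(l, k). u l k) summable_on UNIV \<times> UNIV"
    and sm': "(\<lambda>(k, l). u l k) summable_on UNIV \<times> UNIV"
    by (rule abs_summable_summable[OF abs], rule abs_summable_summable[OF abs'])
  have rows_on: "(\<lambda>k. u l k) summable_on UNIV" for l
    by (rule abs_summable_summable[OF row_on])
  have cols_on: "(\<lambda>l. u l k) summable_on UNIV" for k
    using Infinite_Sum.abs_summable_on_Sigma_iff[where f="\<lambda>(k, l). u l k" and A=UNIV and B="\<lambda>_. UNIV"] abs'
    by (auto intro: abs_summable_summable)
  have "infsum (\<lambda>l. infsum (\<lambda>k. u l k) UNIV) UNIV = infsum (\<lambda>k. infsum (\<lambda>l. u l k) UNIV) UNIV"
    by (rule infsum_swap_banach) (use sm in simp)
  moreover have "(\<lambda>l. infsum (\<lambda>k. u l k) UNIV) summable_on UNIV"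
    using summable_on_Sigma_banach[of "\<lambda>l k. u l k" UNIV "\<lambda>_. UNIV"] sm by simp
  moreover have "(\<lambda>k. infsum (\<lambda>l. u l k) UNIV) summable_on UNIV"
    using summable_on_Sigma_banach[of "\<lambda>k l. u l k" UNIV "\<lambda>_. UNIV"] sm' by simp
  ultimately show ?thesis
    using infsum_eq rows_on cols_on by simp
qed

definition delay :: "nat \<Rightarrow> (nat \<Rightarrow> real) \<Rightarrow> nat \<Rightarrow> real" where
  "delay n g k = (if n \<le> k then g (k - n) else 0)"

lemma sums_delay_iff: "delay n g sums s \<longleftrightarrow> g sums s"
  using sums_iff_shift[of "delay n g" n s] by (simp add: delay_def)

lemma abs_delay: "\<bar>delay n g k\<bar> = delay n (\<lambda>j. \<bar>g j\<bar>) k"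
  and delay_mult: "delay n g k * h k = delay n (\<lambda>j. g j * h (j + n)) k"
  by (simp_all add: delay_def)

lemma convolution_array_abs_summable:
  fixes f E h :: "nat \<Rightarrow> real"
  assumes f: "summable (\<lambda>k. \<bar>f k\<bar>)" and E: "summable (\<lambda>l. \<bar>E l\<bar>)" and h: "\<And>k. \<bar>h k\<bar> \<le> B"
  defines "u l k \<equiv> E l * (f k - delay (Suc l) f k) * h k"
  shows "summable (\<lambda>k. \<bar>u l k\<bar>)" and "summable (\<lambda>l. \<Sum>k. \<bar>u l k\<bar>)"
proof -
  define v where "v l k = \<bar>E l\<bar> * B * (\<bar>f k\<bar> + \<bar>delay (Suc l) f k\<bar>)" for l k
  have v_sums: "(\<lambda>k. v l k) sums (\<bar>E l\<bar> * (2 * B * (\<Sum>k. \<bar>f k\<bar>)))" for l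
  proof -
    have "(\<lambda>k. \<bar>f k\<bar> + \<bar>delay (Suc l) f k\<bar>) sums ((\<Sum>k. \<bar>f k\<bar>) + (\<Sum>k. \<bar>f k\<bar>))"
      unfolding abs_delay using f by (intro sums_add) (simp_all add: sums_delay_iff summable_sums)
    from sums_mult[OF this, of "\<bar>E l\<bar> * B"] show ?thesis
      by (simp add: v_def algebra_simps)
  qed
  have u_le_v: "\<bar>u l k\<bar> \<le> v l k" for l k
  proof -
    have "\<bar>f k - delay (Suc l) f k\<bar> * \<bar>h k\<bar> \<le> (\<bar>f k\<bar> + \<bar>delay (Suc l) f k\<bar>) * B"
      using h[of k] by (intro mult_mono abs_triangle_ineq4) simp_all
    from mult_left_mono[OF this, of "\<bar>E l\<bar>"] show ?thesis
      unfolding u_def v_def abs_mult by (simp add: algebra_simps)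
  qed
  show rows: "summable (\<lambda>k. \<bar>u l k\<bar>)" for l
    by (rule summable_comparison_test'[OF sums_summable[OF v_sums[of l]], of 0]) (simp add: u_le_v)
  have row_sum: "(\<Sum>k. \<bar>u l k\<bar>) \<le> \<bar>E l\<bar> * (2 * B * (\<Sum>k. \<bar>f k\<bar>))" for l
    using suminf_le[OF u_le_v rows sums_summable[OF v_sums]] v_sums by (simp add: sums_iff)
  show "summable (\<lambda>l. \<Sum>k. \<bar>u l k\<bar>)"
    by (rule summable_comparison_test'[OF summable_mult2[OF E, of "2 * B * (\<Sum>k. \<bar>f k\<bar>)"], of 0])
      (simp add: suminf_nonneg[OF rows] row_sum)
qed

lemma suminf_convolution_swap:
  fixes f E h :: "nat \<Rightarrow> real"
  assumes f: "summable (\<lambda>k. \<bar>f k\<bar>)" and E: "summable (\<lambda>l. \<bar>E l\<bar>)" and h: "\<And>k. \<bar>h k\<bar> \<le> B"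
  shows "(\<Sum>k. ((\<Sum>l. E l) * f k - (\<Sum>l<k. E l * f (k - 1 - l))) * h k)
       = (\<Sum>l. E l * (\<Sum>j. f j * (h j - h (j + l + 1))))"
proof -
  define u where "u l k = E l * (f k - delay (Suc l) f k) * h k" for l k
  have fh: "summable (\<lambda>k. f k * h (k + c))" for c
    by (rule summable_comparison_test'[OF summable_mult2[OF f, of B], of 0])
      (simp add: abs_mult mult_left_mono h)
  have "(\<lambda>l. u l k) sums (((\<Sum>l. E l) * f k - (\<Sum>l<k. E l * f (k - 1 - l))) * h k)" for k
  proof -
    have "(\<lambda>l. E l * delay (Suc l) f k) sums (\<Sum>l<k. E l * delay (Suc l) f k)"
      by (rule sums_finite) (auto simp: delay_def)
    moreover have "(\<Sum>l<k. E l * delay (Suc l) f k) = (\<Sum>l<k. E l * f (k - 1 - l))"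
      by (intro sum.cong) (auto simp: delay_def)
    moreover have "summable E" using E by (rule summable_rabs_cancel)
    ultimately show ?thesis
      unfolding u_def right_diff_distrib left_diff_distrib
      by (intro sums_diff sums_mult2) (simp_all add: summable_sums)
  qed
  moreover have "(\<lambda>k. u l k) sums (E l * (\<Sum>j. f j * (h j - h (j + l + 1))))" for l
  proof -
    have "(\<lambda>k. delay (Suc l) f k * h k) sums (\<Sum>j. f j * h (j + l + 1))"
      unfolding delay_mult sums_delay_iff using fh[of "Suc l"] by (simp add: summable_sums)
    then have "(\<lambda>k. u l k) sums (E l * ((\<Sum>j. f j * h j) - (\<Sum>j. f j * h (j + l + 1))))"
      unfolding u_def mult.assoc left_diff_distrib
      using fh[of 0] by (intro sums_mult sums_diff) (simp_all add: summable_sums)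
    then show ?thesis
      using fh[of 0] fh[of "l + 1"] by (simp add: suminf_diff right_diff_distrib[symmetric])
  qed
  moreover have "(\<Sum>l. \<Sum>k. u l k) = (\<Sum>k. \<Sum>l. u l k)"
    unfolding u_def by (rule suminf_swap_abs[OF convolution_array_abs_summable[OF f E h]])
  ultimately show ?thesis by (simp add: sums_iff)
qed

lemma summable_norm_powser_of_abs_summable:
  fixes f :: "nat \<Rightarrow> real"
  assumes "summable (\<lambda>k. \<bar>f k\<bar>)" and "\<bar>z\<bar> \<le> 1"
  shows "summable (\<lambda>k. norm (f k * z ^ k))"
proof (rule summable_comparison_test'[OF assms(1), of 0])
  show "norm (norm (f k * z ^ k)) \<le> \<bar>f k\<bar>" for k
    using assms(2) by (simp add: abs_mult power_abs mult_left_le power_le_one)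
qed

lemma powser_recurrence_of_deriv_eq:
  fixes f c :: "nat \<Rightarrow> real"
  assumes f: "summable (\<lambda>k. \<bar>f k\<bar>)" and c: "summable (\<lambda>m. \<bar>c m\<bar>)"
    and r: "0 < r" "r \<le> 1"
    and deriv: "\<And>z. \<bar>z\<bar> < r \<Longrightarrow> ((\<lambda>w. \<Sum>k. f k * w ^ k) has_field_derivative
                   (\<Sum>m. c m * z ^ m) * (\<Sum>k. f k * z ^ k)) (at z)"
  shows "real (Suc k) * f (Suc k) = (\<Sum>m\<le>k. c m * f (k - m))"
proof -
  have "diffs f k - (\<Sum>m\<le>k. c m * f (k - m)) = 0"
  proof (rule powser_coeffs_eq_0[OF r(1)])
    fix z :: real
    assume z: "\<bar>z\<bar> < r"
    with r have z1: "\<bar>z\<bar> < 1" by simp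
    have conv: "summable (\<lambda>k. f k * w ^ k)" if "norm w < 1" for w :: real
      using summable_norm_powser_of_abs_summable[OF f, of w] that by (simp add: summable_norm_cancel)
    have "((\<lambda>w. \<Sum>k. f k * w ^ k) has_field_derivative (\<Sum>k. diffs f k * z ^ k)) (at z)"
      using termdiffs_strong'[OF conv] z1 by simp
    with deriv[OF z] have "(\<lambda>k. diffs f k * z ^ k) sums ((\<Sum>m. c m * z ^ m) * (\<Sum>k. f k * z ^ k))"
      using summable_sums[OF termdiff_converges[OF _ conv]] z1 DERIV_unique by fastforce
    moreover have "(\<lambda>k. \<Sum>m\<le>k. c m * z ^ m * (f (k - m) * z ^ (k - m))) sums
        ((\<Sum>m. c m * z ^ m) * (\<Sum>k. f k * z ^ k))"
      using z1 by (intro Cauchy_product_sums summable_norm_powser_of_abs_summable f c) simp_all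
    moreover have "c m * z ^ m * (f (k - m) * z ^ (k - m)) = c m * f (k - m) * z ^ k"
      if "m \<le> k" for k m
      using that by (simp add: power_add[symmetric] mult_ac)
    ultimately have "(\<lambda>k. diffs f k * z ^ k - (\<Sum>m\<le>k. c m * f (k - m)) * z ^ k) sums 0"
      using sums_diff by (fastforce simp: sum_distrib_right)
    then show "(\<lambda>k. (diffs f k - (\<Sum>m\<le>k. c m * f (k - m))) * z ^ k) sums 0"
      by (simp add: algebra_simps)
  qed
  then show ?thesis by (simp add: diffs_def)
qed

lemma half_sum_abs_diff_eq:
  fixes f g :: "nat \<Rightarrow> real"
  assumes f: "\<And>k. 0 \<le> f k" "f sums 1" and g: "\<And>k. 0 \<le> g k" "g sums 1"
  defines "A \<equiv> {k. g k < f k}"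
  shows "1 / 2 * (\<Sum>k. \<bar>f k - g k\<bar>) = (\<Sum>k. f k * indicator A k) - (\<Sum>k. g k * indicator A k)"
proof -
  have "summable (\<lambda>k. f k * indicator A k)"
    by (rule summable_comparison_test'[OF sums_summable[OF f(2)], of 0]) (simp add: f(1) indicator_def)
  moreover have "summable (\<lambda>k. g k * indicator A k)"
    by (rule summable_comparison_test'[OF sums_summable[OF g(2)], of 0]) (simp add: g(1) indicator_def)
  ultimately have "(\<lambda>k. 2 * (f k * indicator A k - g k * indicator A k) - (f k - g k))
      sums (2 * ((\<Sum>k. f k * indicator A k) - (\<Sum>k. g k * indicator A k)) - (1 - 1))"
    using f(2) g(2) by (intro sums_diff sums_mult) (simp_all add: summable_sums)
  moreover have "\<bar>f k - g k\<bar> = 2 * (f k * indicator A k - g k * indicator A k) - (f k - g k)" for k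
    by (simp add: A_def indicator_def)
  ultimately show ?thesis by (simp add: sums_iff)
qed

lemma summable_weighted_abs_sum:
  fixes b :: "'i \<Rightarrow> nat \<Rightarrow> real" and w :: "nat \<Rightarrow> real"
  assumes w: "\<And>l. 0 \<le> w l" and b: "\<And>i. i \<in> I \<Longrightarrow> summable (\<lambda>l. w l * \<bar>b i l\<bar>)"
  shows "summable (\<lambda>l. w l * \<bar>\<Sum>i\<in>I. b i l\<bar>)"
    and "(\<Sum>l. w l * \<bar>\<Sum>i\<in>I. b i l\<bar>) \<le> (\<Sum>i\<in>I. \<Sum>l. w l * \<bar>b i l\<bar>)"
proof -
  have le: "w l * \<bar>\<Sum>i\<in>I. b i l\<bar> \<le> (\<Sum>i\<in>I. w l * \<bar>b i l\<bar>)" for l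
    using mult_left_mono[OF sum_abs w] by (simp add: sum_distrib_left)
  have sum: "summable (\<lambda>l. \<Sum>i\<in>I. w l * \<bar>b i l\<bar>)"
    using b by (rule summable_sum)
  show "summable (\<lambda>l. w l * \<bar>\<Sum>i\<in>I. b i l\<bar>)"
    by (rule summable_comparison_test'[OF sum, of 0]) (simp add: le w)
  moreover have "(\<Sum>l. \<Sum>i\<in>I. w l * \<bar>b i l\<bar>) = (\<Sum>i\<in>I. \<Sum>l. w l * \<bar>b i l\<bar>)"
    using b by (rule suminf_sum)
  ultimately show "(\<Sum>l. w l * \<bar>\<Sum>i\<in>I. b i l\<bar>) \<le> (\<Sum>i\<in>I. \<Sum>l. w l * \<bar>b i l\<bar>)"
    using suminf_le[OF le _ sum] by simp
qed

section \<open>Probability generating functions\<close>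

context prob_space
begin

lemma sums_prob_eq_nat:
  assumes "X \<in> measurable M (count_space (UNIV :: nat set))"
  shows "(\<lambda>k. prob {\<omega> \<in> space M. X \<omega> = k}) sums 1"
proof -
  have "range (\<lambda>k. {\<omega> \<in> space M. X \<omega> = k}) \<subseteq> events" using assms by auto
  moreover have "disjoint_family (\<lambda>k. {\<omega> \<in> space M. X \<omega> = k})"
    by (auto simp: disjoint_family_on_def)
  moreover have "(\<Union>k. {\<omega> \<in> space M. X \<omega> = k}) = space M" by auto
  ultimately show ?thesis using finite_measure_UNION prob_space by metis
qed

lemma indep_vars_measurable: "indep_vars M' X I \<Longrightarrow> i \<in> I \<Longrightarrow> X i \<in> measurable M (M' i)"
  unfolding indep_vars_def2 by auto

lemma pgf_eq_expectation:
  assumes X: "X \<in> measurable M (count_space UNIV)" and z: "\<bar>z\<bar> < 1"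
  shows "pgf M X z = expectation (\<lambda>\<omega>. z ^ X \<omega>)"
proof -
  define A where "A k = {\<omega> \<in> space M. X \<omega> = k}" for k
  have A: "A k \<in> events" for k using X unfolding A_def by auto
  define F where "F k \<omega> = z ^ k * indicator (A k) \<omega>" for k \<omega>
  have F_single: "F k \<omega> = (if k = X \<omega> then z ^ k else 0)" if "\<omega> \<in> space M" for k \<omega>
    using that by (auto simp: F_def A_def)
  have "integrable M (F k)" for k
    unfolding F_def using A by (intro integrable_mult_right integrable_real_indicator) (auto simp: less_top[symmetric])
  moreover have "AE \<omega> in M. summable (\<lambda>k. norm (F k \<omega>))"
    by (rule AE_I2) (simp add: F_single if_distrib cong: if_cong)
  moreover have "summable (\<lambda>k. \<integral>\<omega>. norm (F k \<omega>) \<partial>M)"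
  proof (rule summable_comparison_test'[of "\<lambda>k. \<bar>z\<bar> ^ k" 0])
    show "summable (\<lambda>k. \<bar>z\<bar> ^ k)" using z by (simp add: summable_geometric)
    show "norm (\<integral>\<omega>. norm (F k \<omega>) \<partial>M) \<le> \<bar>z\<bar> ^ k" for k
      using A[of k] by (simp add: F_def abs_mult power_abs mult_left_le)
  qed
  ultimately have "expectation (\<lambda>\<omega>. \<Sum>k. F k \<omega>) = (\<Sum>k. expectation (F k))"
    by (rule integral_suminf)
  moreover have "expectation (\<lambda>\<omega>. \<Sum>k. F k \<omega>) = expectation (\<lambda>\<omega>. z ^ X \<omega>)"
    using sums_unique[OF sums_single[of _ "\<lambda>k. z ^ k"]]
    by (intro Bochner_Integration.integral_cong refl) (simp add: F_single)
  moreover have "expectation (F k) = prob (A k) * z ^ k" for k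
    unfolding F_def using A[of k] by (simp add: sets.Int_space_eq2)
  ultimately show ?thesis by (simp add: pgf_def A_def)
qed

lemma pgf_sum_indep:
  assumes indep: "indep_vars (\<lambda>_. count_space UNIV) X I" and I: "finite I" and z: "\<bar>z\<bar> < 1"
  shows "pgf M (\<lambda>\<omega>. \<Sum>i\<in>I. X i \<omega>) z = (\<Prod>i\<in>I. pgf M (X i) z)"
proof -
  note X = indep_vars_measurable[OF indep]
  have "indep_vars (\<lambda>_. borel) (\<lambda>i \<omega>. z ^ X i \<omega>) I"
    by (rule indep_vars_compose2[OF indep]) simp
  moreover have "integrable M (\<lambda>\<omega>. z ^ X i \<omega>)" if "i \<in> I" for i
  proof (rule integrable_const_bound[where B=1])
    show "AE \<omega> in M. norm (z ^ X i \<omega>) \<le> 1"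
      using z by (simp add: power_abs power_le_one)
    show "(\<lambda>\<omega>. z ^ X i \<omega>) \<in> borel_measurable M" using X[OF that] by measurable
  qed
  ultimately have "expectation (\<lambda>\<omega>. \<Prod>i\<in>I. z ^ X i \<omega>) = (\<Prod>i\<in>I. expectation (\<lambda>\<omega>. z ^ X i \<omega>))"
    using I by (intro indep_vars_lebesgue_integral) auto
  moreover have "(\<lambda>\<omega>. \<Sum>i\<in>I. X i \<omega>) \<in> measurable M (count_space UNIV)"
    using X by measurable
  ultimately show ?thesis
    using z X by (simp add: pgf_eq_expectation power_sum)
qed

lemma pgf_has_field_derivative:
  assumes X: "X \<in> measurable M (count_space UNIV)" and z: "\<bar>z\<bar> < 1"
  shows "(pgf M X has_field_derivative deriv (pgf M X) z) (at z)"
proof -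
  have "summable (\<lambda>k. prob {\<omega> \<in> space M. X \<omega> = k} * 1 ^ k)"
    using sums_summable[OF sums_prob_eq_nat[OF X]] by simp
  from termdiffs_strong[OF this, of z] z
  have "(pgf M X has_field_derivative (\<Sum>k. diffs (\<lambda>k. prob {\<omega> \<in> space M. X \<omega> = k}) k * z ^ k)) (at z)"
    unfolding pgf_def[abs_def] by simp
  then show ?thesis by (metis DERIV_imp_deriv)
qed

lemma pgf_sum_indep_log_deriv:
  assumes indep: "indep_vars (\<lambda>_. count_space UNIV) X I" and I: "finite I" and z: "\<bar>z\<bar> < 1"
    and nonzero: "\<And>i. i \<in> I \<Longrightarrow> pgf M (X i) z \<noteq> 0"
  shows "(pgf M (\<lambda>\<omega>. \<Sum>i\<in>I. X i \<omega>) has_field_derivative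
           (\<Sum>i\<in>I. deriv (pgf M (X i)) z / pgf M (X i) z) * pgf M (\<lambda>\<omega>. \<Sum>i\<in>I. X i \<omega>) z) (at z)"
proof -
  have "((\<lambda>w. \<Prod>i\<in>I. pgf M (X i) w) has_field_derivative
          (\<Prod>i\<in>I. pgf M (X i) z) * (\<Sum>i\<in>I. deriv (pgf M (X i)) z / pgf M (X i) z)) (at z)"
    using nonzero pgf_has_field_derivative[OF indep_vars_measurable[OF indep] z]
    by (rule has_field_derivative_prod')
  then have "((\<lambda>w. \<Prod>i\<in>I. pgf M (X i) w) has_field_derivative
          (\<Sum>i\<in>I. deriv (pgf M (X i)) z / pgf M (X i) z) * pgf M (\<lambda>\<omega>. \<Sum>i\<in>I. X i \<omega>) z) (at z)"
    using pgf_sum_indep[OF indep I z] by (simp add: mult.commute)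
  then show ?thesis
    by (rule has_field_derivative_transform_within_open[where S="ball 0 1"])
      (use z pgf_sum_indep[OF indep I] in auto)
qed

lemma sum_indep_prob_recurrence:
  fixes X :: "'i \<Rightarrow> 'a \<Rightarrow> nat" and a :: "'i \<Rightarrow> nat \<Rightarrow> real"
  assumes indep: "indep_vars (\<lambda>_. count_space UNIV) X I" and I: "finite I"
    and log_deriv: "\<And>i. i \<in> I \<Longrightarrow> \<exists>r>0. r \<le> 1 \<and> (\<forall>z. \<bar>z\<bar> < r \<longrightarrow>
            pgf M (X i) z \<noteq> 0 \<and>
            (\<lambda>m. a i (m + 1) * z ^ m) sums (deriv (pgf M (X i)) z / pgf M (X i) z))"
    and a: "\<And>i. i \<in> I \<Longrightarrow> summable (\<lambda>m. \<bar>a i (m + 1)\<bar>)"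
  shows "real (Suc k) * prob {\<omega> \<in> space M. (\<Sum>i\<in>I. X i \<omega>) = Suc k}
       = (\<Sum>m\<le>k. (\<Sum>i\<in>I. a i (m + 1)) * prob {\<omega> \<in> space M. (\<Sum>i\<in>I. X i \<omega>) = k - m})"
proof -
  define Y where "Y \<omega> = (\<Sum>i\<in>I. X i \<omega>)" for \<omega>
  define f where "f k = prob {\<omega> \<in> space M. Y \<omega> = k}" for k
  define C where "C m = (\<Sum>i\<in>I. a i (m + 1))" for m
  have "Y \<in> measurable M (count_space UNIV)"
    using indep_vars_measurable[OF indep] unfolding Y_def by measurable
  then have f: "summable (\<lambda>k. \<bar>f k\<bar>)"
    using sums_summable[OF sums_prob_eq_nat] by (simp add: f_def)
  have C: "summable (\<lambda>m. \<bar>C m\<bar>)"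
    using summable_weighted_abs_sum(1)[of "\<lambda>_. 1" I "\<lambda>i m. a i (m + 1)"] a by (simp add: C_def)
  obtain R where R: "\<And>i. i \<in> I \<Longrightarrow> 0 < R i \<and> R i \<le> 1 \<and> (\<forall>z. \<bar>z\<bar> < R i \<longrightarrow>
      pgf M (X i) z \<noteq> 0 \<and> (\<lambda>m. a i (m + 1) * z ^ m) sums (deriv (pgf M (X i)) z / pgf M (X i) z))"
    using log_deriv by metis
  define r where "r = Min (insert 1 (R ` I))"
  have r: "0 < r" "r \<le> 1" "\<And>i. i \<in> I \<Longrightarrow> r \<le> R i"
    using R I by (auto simp: r_def)
  have "((\<lambda>w. \<Sum>k. f k * w ^ k) has_field_derivative (\<Sum>m. C m * z ^ m) * (\<Sum>k. f k * z ^ k)) (at z)"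
    if z: "\<bar>z\<bar> < r" for z
  proof -
    have "(\<lambda>m. C m * z ^ m) sums (\<Sum>i\<in>I. deriv (pgf M (X i)) z / pgf M (X i) z)"
      unfolding C_def sum_distrib_right using R r z by (intro sums_sum) force
    moreover have "pgf M Y = (\<lambda>w. \<Sum>k. f k * w ^ k)"
      by (simp add: pgf_def f_def fun_eq_iff)
    ultimately show ?thesis
      using pgf_sum_indep_log_deriv[OF indep I, of z] R r z unfolding Y_def[abs_def]
      by (force simp: sums_unique[symmetric])
  qed
  from powser_recurrence_of_deriv_eq[OF f C r(1,2) this]
  show ?thesis by (simp add: f_def Y_def C_def)
qed

end

section \<open>The Stein equation of the negative binomial distribution\<close>

lemma nb_pmf_Suc:
  "real (Suc k) * nb_pmf \<alpha> p (Suc k) = (1 - p) * (\<alpha> + real k) * nb_pmf \<alpha> p k"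
proof -
  have "\<alpha> + real (Suc k) - 1 = (\<alpha> + real k - 1) + 1" by simp
  then have "real (Suc k) * ((\<alpha> + real (Suc k) - 1) gchoose Suc k)
      = (\<alpha> + real k) * ((\<alpha> + real k - 1) gchoose k)"
    by (simp only: gbinomial_rec) (simp del: of_nat_Suc)
  then show ?thesis
    unfolding nb_pmf_def by (simp only: power_Suc mult_ac) (metis mult.left_commute)
qed

lemma summable_mean_of_recurrence:
  fixes f C :: "nat \<Rightarrow> real"
  assumes f: "\<And>k. 0 \<le> f k" "summable f" and C: "summable (\<lambda>m. \<bar>C m\<bar>)"
    and rec: "\<And>k. real (Suc k) * f (Suc k) = (\<Sum>m\<le>k. C m * f (k - m))"
  shows "summable (\<lambda>k. real k * f k)"
proof -
  have conv: "summable (\<lambda>k. \<Sum>m\<le>k. \<bar>C m\<bar> * f (k - m))"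
    using Cauchy_product_sums[of "\<lambda>m. \<bar>C m\<bar>" f] C f by (auto intro: sums_summable)
  have le: "\<bar>real (Suc k) * f (Suc k)\<bar> \<le> (\<Sum>m\<le>k. \<bar>C m\<bar> * f (k - m))" for k
    unfolding rec using sum_abs[of "\<lambda>m. C m * f (k - m)" "{..k}"] f(1) by (simp add: abs_mult)
  have "summable (\<lambda>k. real (Suc k) * f (Suc k))"
    by (rule summable_comparison_test'[OF conv, of 0]) (use le in simp)
  then show ?thesis by (subst summable_Suc_iff[symmetric]) simp
qed

lemma stein_operator_eq_of_recurrence:
  fixes f C :: "nat \<Rightarrow> real"
  assumes C: "summable C" and rec: "\<And>k. real (Suc k) * f (Suc k) = (\<Sum>m\<le>k. C m * f (k - m))"
    and mean: "q * \<alpha> = (1 - q) * suminf C"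
  shows "q * (\<alpha> + real k) * f k - real (Suc k) * f (Suc k)
       = (\<Sum>l. C (Suc l) - q * C l) * f k - (\<Sum>l<k. (C (Suc l) - q * C l) * f (k - 1 - l))"
proof -
  have sum_E: "(\<Sum>l. C (Suc l) - q * C l) = q * \<alpha> - C 0"
    using suminf_diff[OF summable_Suc_iff[THEN iffD2, OF C] summable_mult[OF C, of q]]
      suminf_split_head[OF C] suminf_mult[OF C, of q] mean by (simp add: algebra_simps)
  have "real (Suc k) * f (Suc k) = C 0 * f k + (\<Sum>l<k. C (Suc l) * f (k - 1 - l))"
  proof (cases k)
    case (Suc k')
    have "(\<Sum>m\<le>Suc k'. C m * f (Suc k' - m)) = C 0 * f (Suc k') + (\<Sum>l\<le>k'. C (Suc l) * f (k' - l))"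
      by (subst sum.atMost_Suc_shift) simp
    then show ?thesis unfolding rec Suc by (simp add: lessThan_Suc_atMost)
  qed (use rec[of 0] in simp)
  moreover have "real k * f k = (\<Sum>l<k. C l * f (k - 1 - l))"
  proof (cases k)
    case (Suc k')
    then show ?thesis using rec[of k'] by (simp add: lessThan_Suc_atMost)
  qed simp
  ultimately show ?thesis
    unfolding sum_E by (simp add: algebra_simps sum_subtractf sum_distrib_left)
qed

locale negative_binomial =
  fixes \<alpha> p :: real
  assumes alpha_pos: "0 < \<alpha>" and p_pos: "0 < p" and p_less_1: "p < 1"
begin

abbreviation q :: real where "q \<equiv> 1 - p"

abbreviation nb :: "nat \<Rightarrow> real" where "nb \<equiv> nb_pmf \<alpha> p"

lemma q_pos: "0 < q" and q_less_1: "q < 1"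
  using p_pos p_less_1 by simp_all

lemma nb_Suc: "real (Suc k) * nb (Suc k) = q * (\<alpha> + real k) * nb k"
  by (rule nb_pmf_Suc)

lemma nb_pos: "0 < nb k"
proof (induction k)
  case 0
  then show ?case using p_pos by (simp add: nb_pmf_def)
next
  case (Suc k)
  then have "0 < real (Suc k) * nb (Suc k)"
    unfolding nb_Suc using q_pos alpha_pos by (simp add: add_pos_nonneg)
  then show ?case by (simp add: zero_less_mult_iff)
qed

lemma sums_nb: "nb sums 1"
proof -
  have "(\<lambda>k. ((-\<alpha>) gchoose k) * (-q) ^ k) sums (1 + -q) powr (-\<alpha>)"
    using gen_binomial_real[of "-q" "-\<alpha>"] p_pos p_less_1 by simp
  moreover have "((-\<alpha>) gchoose k) * (-q) ^ k = ((\<alpha> + real k - 1) gchoose k) * q ^ k" for k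
    by (simp add: gbinomial_minus power_mult_distrib[symmetric])
  ultimately have "(\<lambda>k. p powr \<alpha> * (((\<alpha> + real k - 1) gchoose k) * q ^ k)) sums (p powr \<alpha> * p powr (-\<alpha>))"
    by (intro sums_mult) simp
  then show ?thesis
    using p_pos by (simp add: nb_pmf_def[abs_def] powr_minus mult_ac)
qed

lemma summable_nb: "summable nb" and suminf_nb: "(\<Sum>k. nb k) = 1"
  using sums_nb by (simp_all add: sums_iff)

definition prob_less :: "nat \<Rightarrow> real" where
  "prob_less k = (\<Sum>i<k. nb i)"

definition nb_prob :: "nat set \<Rightarrow> real" where
  "nb_prob A = (\<Sum>k. nb k * indicator A k)"

text \<open>The paper's \<open>g\<^sub>A\<close>, solving the Stein equation for \<open>indicator A\<close>; its value at \<open>0\<close> is a junk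
  zero from division by zero, which the equation never uses.\<close>

definition stein_sol :: "nat set \<Rightarrow> nat \<Rightarrow> real" where
  "stein_sol A m = (\<Sum>i<m. nb i * (indicator A i - nb_prob A)) / (real m * nb m)"

lemma summable_nb_shift: "summable (\<lambda>i. nb (i + k))"
  using summable_nb by (simp add: summable_iff_shift)

lemma one_minus_prob_less: "1 - prob_less k = (\<Sum>i. nb (i + k))"
  using suminf_split_initial_segment[OF summable_nb, of k] suminf_nb by (simp add: prob_less_def)

lemma prob_less_nonneg: "0 \<le> prob_less k"
  unfolding prob_less_def using nb_pos by (simp add: sum_nonneg less_imp_le)

lemma prob_less_le_1: "prob_less k \<le> 1"
  using one_minus_prob_less[of k] suminf_nonneg[OF summable_nb_shift, of k] nb_pos
  by (simp add: less_imp_le)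

lemma tail_recursion_le: "real k * (1 - prob_less (Suc k)) \<le> q * (\<alpha> + real k) * (1 - prob_less k)"
proof -
  have "real k * nb (i + Suc k) \<le> q * (\<alpha> + real k) * nb (i + k)" for i
  proof -
    have "real (Suc (i + k)) * (real k * nb (i + Suc k)) = real k * (real (Suc (i + k)) * nb (Suc (i + k)))"
      by (simp add: algebra_simps)
    also have "\<dots> = real k * (q * (\<alpha> + real (i + k)) * nb (i + k))"
      by (simp only: nb_Suc)
    also have "\<dots> = (real k * (\<alpha> + real (i + k))) * (q * nb (i + k))"
      by (simp add: algebra_simps)
    also have "\<dots> \<le> ((\<alpha> + real k) * real (Suc (i + k))) * (q * nb (i + k))"
      using alpha_pos q_pos nb_pos[of "i + k"] by (intro mult_right_mono) (auto simp: algebra_simps)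
    also have "\<dots> = real (Suc (i + k)) * (q * (\<alpha> + real k) * nb (i + k))"
      by (simp add: algebra_simps)
    finally show ?thesis by simp
  qed
  then have "(\<Sum>i. real k * nb (i + Suc k)) \<le> (\<Sum>i. q * (\<alpha> + real k) * nb (i + k))"
    by (intro suminf_le summable_mult summable_nb_shift)
  then show ?thesis
    using summable_nb_shift[of "Suc k"] summable_nb_shift[of k]
    by (simp add: one_minus_prob_less suminf_mult)
qed

lemma head_recursion_le: "q * (\<alpha> + real k) * prob_less k \<le> real k * prob_less (Suc k)"
proof (induction k)
  case (Suc k)
  have "real (Suc k) * prob_less (Suc (Suc k)) - q * (\<alpha> + real (Suc k)) * prob_less (Suc k)
      = (real k * prob_less (Suc k) - q * (\<alpha> + real k) * prob_less k) + p * prob_less (Suc k)"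
    using nb_Suc[of k] by (simp add: prob_less_def algebra_simps)
  moreover have "0 \<le> p * prob_less (Suc k)"
    using p_pos prob_less_nonneg by simp
  ultimately show ?case using Suc by linarith
qed (simp add: prob_less_def)

lemma tail_ratio_decreasing:
  assumes "1 \<le> k"
  shows "(1 - prob_less (Suc k)) / (real (Suc k) * nb (Suc k)) \<le> (1 - prob_less k) / (real k * nb k)"
proof -
  have "(1 - prob_less (Suc k)) * (real k * nb k) \<le> (1 - prob_less k) * (q * (\<alpha> + real k) * nb k)"
    using mult_right_mono[OF tail_recursion_le[of k], of "nb k"] nb_pos[of k]
    by (simp add: algebra_simps)
  then show ?thesis
    unfolding nb_Suc using assms nb_pos[of k] q_pos alpha_pos
    by (simp add: divide_simps mult_pos_pos)
qed

lemma tail_ratio_le: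
  assumes "1 \<le> k"
  shows "(1 - prob_less k) / (real k * nb k) \<le> (1 - nb 0) / nb 1"
  using assms
proof (induction k rule: dec_induct)
  case base
  then show ?case by (simp add: prob_less_def)
next
  case (step k)
  then show ?case using tail_ratio_decreasing[of k] by simp
qed

lemma head_ratio_increasing:
  assumes "1 \<le> k"
  shows "prob_less k / (real k * nb k) \<le> prob_less (Suc k) / (real (Suc k) * nb (Suc k))"
proof -
  have "prob_less k * (q * (\<alpha> + real k) * nb k) \<le> prob_less (Suc k) * (real k * nb k)"
    using mult_right_mono[OF head_recursion_le[of k], of "nb k"] nb_pos[of k]
    by (simp add: algebra_simps)
  then show ?thesis
    unfolding nb_Suc using assms nb_pos[of k] q_pos alpha_pos
    by (simp add: divide_simps mult_pos_pos)
qed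

lemma partial_nb_prob_bounds:
  "0 \<le> (\<Sum>i<k. nb i * indicator A i)"
  "(\<Sum>i<k. nb i * indicator A i) \<le> prob_less k"
  "0 \<le> nb_prob A - (\<Sum>i<k. nb i * indicator A i)"
  "nb_prob A - (\<Sum>i<k. nb i * indicator A i) \<le> 1 - prob_less k"
proof -
  have ind: "0 \<le> nb i * indicator A i" "nb i * indicator A i \<le> nb i" for i
    using nb_pos[of i] by (auto simp: indicator_def)
  have summable: "summable (\<lambda>i. nb (i + k) * indicator A (i + k))"
    by (rule summable_comparison_test'[where N=0, OF summable_nb_shift[of k]]) (simp add: ind)
  then have "summable (\<lambda>i. nb i * indicator A i)"
    using summable_iff_shift[of "\<lambda>i. nb i * indicator A i" k] by simp
  then have rest: "nb_prob A - (\<Sum>i<k. nb i * indicator A i) = (\<Sum>i. nb (i + k) * indicator A (i + k))"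
    unfolding nb_prob_def by (subst suminf_split_initial_segment[of _ k]) simp_all
  show "0 \<le> (\<Sum>i<k. nb i * indicator A i)" by (rule sum_nonneg) (simp add: ind)
  show "(\<Sum>i<k. nb i * indicator A i) \<le> prob_less k"
    unfolding prob_less_def by (rule sum_mono) (simp add: ind)
  show "0 \<le> nb_prob A - (\<Sum>i<k. nb i * indicator A i)"
    unfolding rest by (rule suminf_nonneg[OF summable]) (simp add: ind)
  show "nb_prob A - (\<Sum>i<k. nb i * indicator A i) \<le> 1 - prob_less k"
    unfolding rest one_minus_prob_less by (rule suminf_le[OF _ summable summable_nb_shift]) (simp add: ind)
qed

lemma stein_sol_eq:
  "stein_sol A m = ((\<Sum>i<m. nb i * indicator A i) - nb_prob A * prob_less m) / (real m * nb m)"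
  by (simp add: stein_sol_def prob_less_def algebra_simps sum_subtractf sum_distrib_left)

lemma stein_equation:
  "q * (\<alpha> + real k) * stein_sol A (Suc k) - real k * stein_sol A k = indicator A k - nb_prob A"
proof -
  define W where "W m = (\<Sum>i<m. nb i * (indicator A i - nb_prob A))" for m
  have pos: "0 < q * (\<alpha> + real k)" "0 < nb k"
    using q_pos alpha_pos nb_pos by (simp_all add: add_pos_nonneg)
  have "q * (\<alpha> + real k) * stein_sol A (Suc k) = W (Suc k) / nb k"
    unfolding stein_sol_def nb_Suc W_def[symmetric] using p_less_1 alpha_pos by simp
  moreover have "real k * stein_sol A k = W k / nb k"
    using pos by (cases "k = 0") (simp_all add: stein_sol_def W_def)
  ultimately show ?thesis
    using pos by (simp add: W_def diff_divide_distrib[symmetric])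
qed

lemma stein_sol_bound: "\<bar>stein_sol A m\<bar> \<le> (1 - nb 0) / nb 1"
proof (cases "m = 0")
  case True
  then show ?thesis using prob_less_le_1[of 1] nb_pos[of 1] by (simp add: prob_less_def stein_sol_def)
next
  case False
  define u v S where "u = (\<Sum>i<m. nb i * indicator A i)" and "v = nb_prob A - u" and "S = prob_less m"
  have bounds: "0 \<le> u" "u \<le> S" "0 \<le> v" "v \<le> 1 - S" "S \<le> 1"
    using partial_nb_prob_bounds[where k=m and A=A] prob_less_le_1[of m] by (simp_all add: u_def v_def S_def)
  have "u * (1 - S) \<le> 1 - S" "v * S \<le> 1 - S" "0 \<le> u * (1 - S)" "0 \<le> v * S"
    using bounds mult_right_mono[of u 1 "1 - S"] mult_mono[of v "1 - S" S 1] by simp_all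
  then have "\<bar>u * (1 - S) - v * S\<bar> \<le> 1 - S" by (simp add: abs_le_iff)
  moreover have "stein_sol A m = (u * (1 - S) - v * S) / (real m * nb m)"
    unfolding stein_sol_eq u_def v_def S_def by (simp add: algebra_simps)
  ultimately have "\<bar>stein_sol A m\<bar> \<le> (1 - S) / (real m * nb m)"
    using nb_pos[of m] by (simp add: abs_div divide_right_mono)
  also have "\<dots> \<le> (1 - nb 0) / nb 1"
    using tail_ratio_le[of m] False by (simp add: S_def)
  finally show ?thesis .
qed

text \<open>With \<open>u\<close> and \<open>v\<close> the mass of \<open>A\<close> below and from \<open>k\<close> on, the increment is
  \<open>u \<Delta>a - v \<Delta>b\<close> plus the new summand, where \<open>\<Delta>a \<le> 0 \<le> \<Delta>b\<close> are the increments of the tail and head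
  ratios; it is therefore extremal for \<open>u = prob_less k\<close>, \<open>v = 1 - prob_less k\<close>, where it equals
  \<open>nb k / ((k + 1) nb (k + 1))\<close>.\<close>

lemma stein_sol_diff_bound:
  assumes "1 \<le> k"
  shows "\<bar>stein_sol A (Suc k) - stein_sol A k\<bar> \<le> 1 / (q * (\<alpha> + real k))"
proof -
  define u v x S where "u = (\<Sum>i<k. nb i * indicator A i)" and "v = nb_prob A - u"
    and "x = nb k * indicator A k" and "S = prob_less k"
  define r0 r1 where "r0 = real k * nb k" and "r1 = real (Suc k) * nb (Suc k)"
  have bounds: "0 \<le> u" "u \<le> S" "0 \<le> v" "v \<le> 1 - S" "0 \<le> x" "x \<le> nb k"
    using partial_nb_prob_bounds[where k=k and A=A] nb_pos[of k] by (auto simp: u_def v_def x_def S_def indicator_def)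
  have pos: "0 < r0" "0 < r1" "0 < nb k"
    using nb_pos assms by (simp_all add: r0_def r1_def)
  define a0 a1 b0 b1 where "a0 = (1 - S) / r0" and "a1 = (1 - S - nb k) / r1"
    and "b0 = S / r0" and "b1 = (S + nb k) / r1"
  have a: "a1 \<le> a0"
    using tail_ratio_decreasing[OF assms]
    by (simp add: a0_def a1_def r0_def r1_def S_def prob_less_def diff_diff_eq)
  have b: "b0 \<le> b1"
    using head_ratio_increasing[OF assms] by (simp add: b0_def b1_def r0_def r1_def S_def prob_less_def)
  have sol_k: "stein_sol A k = (u - (u + v) * S) / r0"
    by (simp add: stein_sol_eq u_def v_def S_def r0_def)
  have sol_Suc_k: "stein_sol A (Suc k) = (u + x - (u + v) * (S + nb k)) / r1"
    by (simp add: stein_sol_eq u_def v_def x_def S_def r1_def prob_less_def)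
  have "stein_sol A (Suc k) - stein_sol A k = u * (a1 - a0) - v * (b1 - b0) + x / r1"
    using pos unfolding sol_k sol_Suc_k a0_def a1_def b0_def b1_def by (simp add: field_simps)
  moreover have "S * (a1 - a0) - (1 - S) * (b1 - b0) = - (nb k / r1)"
    using pos by (simp add: a0_def a1_def b0_def b1_def field_simps)
  moreover have "S * (a1 - a0) \<le> u * (a1 - a0)" "v * (b1 - b0) \<le> (1 - S) * (b1 - b0)"
    using bounds a b mult_right_mono_neg[of u S "a1 - a0"] mult_right_mono[of v "1 - S" "b1 - b0"]
    by simp_all
  moreover have "u * (a1 - a0) \<le> 0" "0 \<le> v * (b1 - b0)" "0 \<le> x / r1" "x / r1 \<le> nb k / r1"
    using bounds a b pos by (simp_all add: mult_nonneg_nonpos divide_right_mono)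
  ultimately have "\<bar>stein_sol A (Suc k) - stein_sol A k\<bar> \<le> nb k / r1"
    by (simp add: abs_le_iff)
  also have "nb k / r1 = 1 / (q * (\<alpha> + real k))"
    unfolding r1_def nb_Suc using pos(3) by simp
  finally show ?thesis .
qed

lemma stein_sol_increment_bound:
  "\<bar>stein_sol A (Suc j) - stein_sol A (j + l + 2)\<bar> \<le> real (Suc l) / (q * \<alpha>)"
proof (induction l)
  case 0
  have "1 / (q * (\<alpha> + real (Suc j))) \<le> 1 / (q * \<alpha>)"
    using q_pos alpha_pos by (intro divide_left_mono mult_left_mono) auto
  then show ?case
    using stein_sol_diff_bound[of "Suc j" A] by (simp add: abs_minus_commute)
next
  case (Suc l)
  have "1 / (q * (\<alpha> + real (Suc (j + l + 1)))) \<le> 1 / (q * \<alpha>)"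
    using q_pos alpha_pos by (intro divide_left_mono mult_left_mono) auto
  then have "\<bar>stein_sol A (j + l + 3) - stein_sol A (j + l + 2)\<bar> \<le> 1 / (q * \<alpha>)"
    using stein_sol_diff_bound[of "Suc (j + l + 1)" A] by (simp add: numeral_eq_Suc)
  then show ?case
    using Suc abs_triangle_ineq[of "stein_sol A (Suc j) - stein_sol A (j + l + 2)"
        "stein_sol A (j + l + 2) - stein_sol A (j + l + 3)"]
    by (simp add: numeral_eq_Suc add_divide_distrib abs_minus_commute)
qed

lemma suminf_stein_equation:
  fixes f :: "nat \<Rightarrow> real"
  assumes f: "summable (\<lambda>k. \<bar>f k\<bar>)" and mean: "summable (\<lambda>k. real k * \<bar>f k\<bar>)"
  shows "(\<Sum>k. f k * (indicator A k - nb_prob A))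
       = (\<Sum>k. (q * (\<alpha> + real k) * f k - real (Suc k) * f (Suc k)) * stein_sol A (Suc k))"
proof -
  define G where "G = (1 - nb 0) / nb 1"
  define A1 where "A1 k = q * (\<alpha> + real k) * f k * stein_sol A (Suc k)" for k
  define A2 where "A2 k = real k * f k * stein_sol A k" for k
  have A1_dom: "summable (\<lambda>k. q * G * (\<alpha> * \<bar>f k\<bar> + real k * \<bar>f k\<bar>))"
    using f mean by (intro summable_mult summable_add) simp_all
  have A1_bound: "\<bar>A1 k\<bar> \<le> q * G * (\<alpha> * \<bar>f k\<bar> + real k * \<bar>f k\<bar>)" for k
  proof -
    have "\<bar>q * (\<alpha> + real k)\<bar> = q * (\<alpha> + real k)"
      using q_pos alpha_pos by simp
    then have "\<bar>A1 k\<bar> = (q * (\<alpha> + real k) * \<bar>f k\<bar>) * \<bar>stein_sol A (Suc k)\<bar>"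
      by (simp add: A1_def abs_mult)
    also have "\<dots> \<le> (q * (\<alpha> + real k) * \<bar>f k\<bar>) * G"
      unfolding G_def using q_pos alpha_pos by (intro mult_left_mono stein_sol_bound) simp
    finally show ?thesis by (simp add: algebra_simps)
  qed
  have A1: "summable A1"
    by (rule summable_comparison_test'[OF A1_dom, of 0]) (simp add: A1_bound)
  have A2_bound: "\<bar>A2 k\<bar> \<le> G * (real k * \<bar>f k\<bar>)" for k
    using mult_left_mono[OF stein_sol_bound[of A k], of "real k * \<bar>f k\<bar>"]
    by (simp add: A2_def G_def abs_mult algebra_simps)
  have A2: "summable A2"
    by (rule summable_comparison_test'[OF summable_mult[OF mean, of G], of 0]) (simp add: A2_bound)
  have "A1 k - A2 k = f k * (indicator A k - nb_prob A)" for k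
    unfolding A1_def A2_def stein_equation[symmetric] by (simp add: algebra_simps)
  then have "(\<lambda>k. f k * (indicator A k - nb_prob A)) sums (suminf A1 - suminf A2)"
    using sums_diff[OF summable_sums[OF A1] summable_sums[OF A2]] by simp
  moreover have "(\<lambda>k. A2 (Suc k)) sums suminf A2"
    using summable_sums[OF A2] by (subst sums_Suc_iff) (simp add: A2_def)
  then have "(\<lambda>k. A1 k - A2 (Suc k)) sums (suminf A1 - suminf A2)"
    by (rule sums_diff[OF summable_sums[OF A1]])
  moreover have "A1 k - A2 (Suc k)
      = (q * (\<alpha> + real k) * f k - real (Suc k) * f (Suc k)) * stein_sol A (Suc k)" for k
    unfolding A1_def A2_def by (simp only: left_diff_distrib mult.assoc)
  ultimately show ?thesis by (simp add: sums_iff)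
qed

lemma stein_remainder_bound:
  fixes f :: "nat \<Rightarrow> real"
  assumes f: "\<And>k. 0 \<le> f k" "f sums 1"
  shows "\<bar>\<Sum>j. f j * (stein_sol A (Suc j) - stein_sol A (j + l + 2))\<bar> \<le> real (Suc l) / (q * \<alpha>)"
proof -
  define c where "c = real (Suc l) / (q * \<alpha>)"
  have sf: "summable f" using f(2) by (rule sums_summable)
  have bound: "\<bar>f j * (stein_sol A (Suc j) - stein_sol A (j + l + 2))\<bar> \<le> f j * c" for j
    using mult_left_mono[OF stein_sol_increment_bound f(1)] by (simp add: c_def abs_mult f(1))
  have "summable (\<lambda>j. \<bar>f j * (stein_sol A (Suc j) - stein_sol A (j + l + 2))\<bar>)"
    by (rule summable_comparison_test'[OF summable_mult2[OF sf, of c], of 0]) (use bound in auto)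
  then have "\<bar>\<Sum>j. f j * (stein_sol A (Suc j) - stein_sol A (j + l + 2))\<bar> \<le> (\<Sum>j. f j * c)"
    using bound summable_mult2[OF sf] by (intro order.trans[OF summable_rabs suminf_le]) auto
  also have "(\<Sum>j. f j * c) = c"
    using suminf_mult2[OF sf, of c] f(2) by (simp add: sums_iff)
  finally show ?thesis unfolding c_def .
qed

lemma stein_bound:
  fixes f E :: "nat \<Rightarrow> real"
  assumes f: "\<And>k. 0 \<le> f k" "f sums 1" and mean: "summable (\<lambda>k. real k * f k)"
    and E: "summable (\<lambda>l. real (Suc l) * \<bar>E l\<bar>)"
    and stein: "\<And>k. q * (\<alpha> + real k) * f k - real (Suc k) * f (Suc k)
                  = (\<Sum>l. E l) * f k - (\<Sum>l<k. E l * f (k - 1 - l))"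
  shows "(\<Sum>k. f k * indicator A k) - nb_prob A \<le> 1 / (q * \<alpha>) * (\<Sum>l. real (Suc l) * \<bar>E l\<bar>)"
proof -
  define R where "R l = (\<Sum>j. f j * (stein_sol A (Suc j) - stein_sol A (j + l + 2)))" for l
  define D where "D = 1 / (q * \<alpha>)"
  have sf: "summable f" using f(2) by (rule sums_summable)
  have f_abs: "summable (\<lambda>k. \<bar>f k\<bar>)" and mean_abs: "summable (\<lambda>k. real k * \<bar>f k\<bar>)"
    using sf mean f(1) by simp_all
  have E1: "summable (\<lambda>l. \<bar>E l\<bar>)"
    by (rule summable_comparison_test'[OF E, of 0]) (simp add: mult_le_cancel_right1)
  have ER: "\<bar>E l * R l\<bar> \<le> D * (real (Suc l) * \<bar>E l\<bar>)" for l
  proof -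
    have "\<bar>R l\<bar> \<le> real (Suc l) * D"
      using stein_remainder_bound[OF f, of A l] by (simp add: R_def D_def)
    from mult_left_mono[OF this, of "\<bar>E l\<bar>"] show ?thesis by (simp add: abs_mult mult_ac)
  qed
  have ER_summable: "summable (\<lambda>l. \<bar>E l * R l\<bar>)"
    by (rule summable_comparison_test'[OF summable_mult[OF E, of D], of 0]) (use ER in auto)
  have "summable (\<lambda>k. f k * indicator A k)"
    by (rule summable_comparison_test'[OF sf, of 0]) (simp add: f(1) indicator_def)
  then have "(\<lambda>k. f k * (indicator A k - nb_prob A)) sums ((\<Sum>k. f k * indicator A k) - 1 * nb_prob A)"
    unfolding right_diff_distrib using f(2) by (intro sums_diff sums_mult2) (simp_all add: summable_sums)
  then have "(\<Sum>k. f k * indicator A k) - nb_prob A = (\<Sum>k. f k * (indicator A k - nb_prob A))"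
    by (simp add: sums_iff)
  also have "\<dots> = (\<Sum>k. ((\<Sum>l. E l) * f k - (\<Sum>l<k. E l * f (k - 1 - l))) * stein_sol A (Suc k))"
    unfolding suminf_stein_equation[OF f_abs mean_abs] stein ..
  also have "\<dots> = (\<Sum>l. E l * R l)"
    unfolding R_def using suminf_convolution_swap[OF f_abs E1 stein_sol_bound[of A "Suc k" for k]]
    by (simp add: numeral_eq_Suc)
  also have "\<dots> \<le> (\<Sum>l. \<bar>E l * R l\<bar>)"
    using summable_rabs[OF ER_summable] by linarith
  also have "\<dots> \<le> (\<Sum>l. D * (real (Suc l) * \<bar>E l\<bar>))"
    by (rule suminf_le[OF ER ER_summable summable_mult[OF E]])
  also have "\<dots> = D * (\<Sum>l. real (Suc l) * \<bar>E l\<bar>)"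
    by (rule suminf_mult[OF E])
  finally show ?thesis unfolding D_def .
qed

lemma stein_bound_of_recurrence:
  fixes f C :: "nat \<Rightarrow> real"
  assumes f: "\<And>k. 0 \<le> f k" "f sums 1" and C: "summable (\<lambda>m. \<bar>C m\<bar>)"
    and rec: "\<And>k. real (Suc k) * f (Suc k) = (\<Sum>m\<le>k. C m * f (k - m))"
    and mean: "q * \<alpha> = (1 - q) * suminf C"
    and E: "summable (\<lambda>l. real (Suc l) * \<bar>C (Suc l) - q * C l\<bar>)"
  shows "(\<Sum>k. f k * indicator A k) - nb_prob A
         \<le> 1 / (q * \<alpha>) * (\<Sum>l. real (Suc l) * \<bar>C (Suc l) - q * C l\<bar>)"
  using summable_mean_of_recurrence[OF f(1) sums_summable[OF f(2)] C rec] E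
    stein_operator_eq_of_recurrence[OF summable_rabs_cancel[OF C] rec mean]
  by (rule stein_bound[OF f])

end

theorem theorem3p1:
  fixes M :: "'a measure" and X :: "nat \<Rightarrow> 'a \<Rightarrow> nat" and n :: nat
    and a :: "nat \<Rightarrow> nat \<Rightarrow> real" and \<alpha> p \<mu> :: real
  assumes "prob_space M"
    and "prob_space.indep_vars M (\<lambda>_. count_space UNIV) X {..<n}"
    and "\<And>i. i < n \<Longrightarrow> \<exists>r>0. r \<le> 1 \<and> (\<forall>z. \<bar>z\<bar> < r \<longrightarrow>
            pgf M (X i) z \<noteq> 0 \<and>
            (\<lambda>m. a i (m + 1) * z ^ m) sums (deriv (pgf M (X i)) z / pgf M (X i) z))"
    and "\<And>i. i < n \<Longrightarrow> summable (\<lambda>m. a i (m + 1))"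
    and "\<mu> = (\<Sum>i<n. \<Sum>m. a i (m + 1))"
    and "\<alpha> > 0" and "0 < p" and "p < 1"
    and "\<alpha> * (1 - p) / p = \<mu>"
    and "\<And>i. i < n \<Longrightarrow>
           summable (\<lambda>l. real (Suc l) * \<bar>a i (l + 2) - (1 - p) * a i (l + 1)\<bar>)"
  shows "dTV M (\<lambda>\<omega>. \<Sum>i<n. X i \<omega>) (nb_pmf \<alpha> p)
         \<le> 1 / (\<alpha> * (1 - p)) *
           (\<Sum>i<n. \<Sum>l. real (Suc l) * \<bar>a i (l + 2) - (1 - p) * a i (l + 1)\<bar>)"
proof -
  interpret prob_space M by fact
  interpret negative_binomial \<alpha> p by unfold_locales fact+
  define f where "f k = prob {\<omega> \<in> space M. (\<Sum>i<n. X i \<omega>) = k}" for k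
  define C where "C m = (\<Sum>i<n. a i (m + 1))" for m
  define b where "b i l = a i (l + 2) - q * a i (l + 1)" for i l
  have a_abs: "summable (\<lambda>m. \<bar>a i (m + 1)\<bar>)" if "i < n" for i
  proof (rule summable_abs_if_summable_contraction_diff)
    show "summable (\<lambda>m. \<bar>a i (Suc m + 1) - q * a i (m + 1)\<bar>)"
      by (rule summable_comparison_test'[OF assms(10)[OF that], of 0])
        (simp add: mult_le_cancel_right1 numeral_eq_Suc)
  qed (use q_pos q_less_1 in auto)
  have f: "\<And>k. 0 \<le> f k" "f sums 1"
    unfolding f_def using indep_vars_measurable[OF assms(2)] by (auto intro!: sums_prob_eq_nat)
  have rec: "real (Suc k) * f (Suc k) = (\<Sum>m\<le>k. C m * f (k - m))" for k
    unfolding f_def C_def using assms(3) a_abs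
    by (intro sum_indep_prob_recurrence[OF assms(2)]) auto
  have C: "summable (\<lambda>m. \<bar>C m\<bar>)"
    using summable_weighted_abs_sum(1)[of "\<lambda>_. 1" "{..<n}" "\<lambda>i m. a i (m + 1)"] a_abs
    by (simp add: C_def)
  have "suminf C = \<mu>"
    unfolding C_def assms(5) by (rule suminf_sum) (use assms(4) in auto)
  then have mean: "q * \<alpha> = (1 - q) * suminf C"
    using assms(9) p_pos by (simp add: field_simps)
  have E: "C (Suc l) - q * C l = (\<Sum>i<n. b i l)" for l
    by (simp add: b_def C_def numeral_eq_Suc sum_subtractf sum_distrib_left)
  note weighted = summable_weighted_abs_sum[of "\<lambda>l. real (Suc l)" "{..<n}" b]
  have "dTV M (\<lambda>\<omega>. \<Sum>i<n. X i \<omega>) nb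
      = (\<Sum>k. f k * indicator {k. nb k < f k} k) - nb_prob {k. nb k < f k}"
    using half_sum_abs_diff_eq[OF f less_imp_le[OF nb_pos] sums_nb]
    by (simp add: dTV_def nb_prob_def f_def)
  also have "\<dots> \<le> 1 / (q * \<alpha>) * (\<Sum>l. real (Suc l) * \<bar>\<Sum>i<n. b i l\<bar>)"
    using stein_bound_of_recurrence[OF f C rec mean] weighted(1) assms(10)
    by (auto simp: E b_def)
  also have "\<dots> \<le> 1 / (q * \<alpha>) * (\<Sum>i<n. \<Sum>l. real (Suc l) * \<bar>b i l\<bar>)"
    using weighted(2) assms(10) alpha_pos q_pos by (intro mult_left_mono) (auto simp: b_def)
  finally show ?thesis by (simp add: b_def mult.commute)
qed

end
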